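(* Let $E,E'$ be finite sets with $|E'|=2$, $F:\mathcal P(E)\to\mathbb R$ twice continuously differentiable, $\alpha[b]\in\mathcal P(E)$ ($b\in E'$), $\pi\in\mathcal P(E')$ with $\pi(b)>0$ for all $b$, and assume the non-degeneracy conditions 1) and 2) (see context), with the set of minimizers $M^*$ satisfying $|M^*|\geq 2$. Then the set $M^{**}:=\{\hat\nu\in M^*: w_{\hat\nu}>0\}$ of visible pure phases has exactly two elements, and $w_{\hat\nu}=\tfrac12$ for both $\hat\nu\in M^{**}$.
   Context: Free energy $\Phi[\pi](\hat\nu)=F(\pi\cdot\hat\nu)+\sum_b\pi(b)S(\hat\nu(b)|\alpha[b])$ on $\mathcal P(E)^{E'}$, $\pi\cdot\hat\nu=\sum_b\pi(b)\hat\nu(b)$, $S(p|q)=\sum_ap(a)\log(p(a)/q(a))$. Non-degeneracy 1): $\Phi[\pi]$ has a finite set of minimizers $M^*$, each with positive definite Hessian. For $\hat\nu\in M^*$, the stability vector $B_{\hat\nu}\in T\mathcal P(E')=\{x\in\mathbb R^{E'}:\sum x=0\}$ is defined by $\langle x,B_{\hat\nu}\rangle=-(dF_{\pi\cdot\hat\nu}(\sum_bx(b)\hat\nu(b))+\sum_bx(b)S(\hat\nu(b)|\alpha[b]))$ for all $x\in T\mathcal P(E')$, where $dF_\nu$ is the differential of $F$ on $T\mathcal P(E)$. Non-degeneracy 2): distinct minimizers have distinct stability vectors. The weight of $\hat\nu\in M^*$ is $w_{\hat\nu}=\mathbb P(G\in R_{\hat\nu})$ with $R_{\hat\nu}=\{x\in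 T\mathcal P(E'):\langle x,B_{\hat\nu}\rangle>\max_{\hat\nu'\in M^*\setminus\{\hat\nu\}}\langle x,B_{\hat\nu'}\rangle\}$, and $G$ a centered Gaussian vector in $T\mathcal P(E')$ with covariance $C_\pi(b,b')=\pi(b)1_{b=b'}-\pi(b)\pi(b')$. (These are the weights appearing in the AW-metastate $\kappa[\eta]=\sum_{\hat\nu}w_{\hat\nu}\delta_{\mu_{\hat\nu}[\eta]}$ of the model with Gibbs measures $\mu_{F,n}[\eta](\omega)\propto e^{-nF(L_n^\omega)}\prod_i\alpha[\eta(i)](\omega(i))$, $\eta$ i.i.d. $\pi$.) *)

theory Defs
  imports "HOL-Probability.Probability"
begin

definition prob_simplex :: "(real ^ 'a::finite) set" where
  "prob_simplex = {p. (\<forall>a. 0 \<le> p $ a) \<and> (\<Sum>a\<in>UNIV. p $ a) = 1}"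

definition tangent_sp :: "(real ^ 'a::finite) set" where
  "tangent_sp = {x. (\<Sum>a\<in>UNIV. x $ a) = 0}"

definition C2_on :: "(real ^ 'a::finite) set \<Rightarrow> (real ^ 'a \<Rightarrow> real) \<Rightarrow> bool" where
  "C2_on U F \<longleftrightarrow> open U \<and>
     (\<exists>F' :: real ^ 'a \<Rightarrow> ((real ^ 'a) \<Rightarrow>\<^sub>L real).
      \<exists>F'' :: real ^ 'a \<Rightarrow> ((real ^ 'a) \<Rightarrow>\<^sub>L ((real ^ 'a) \<Rightarrow>\<^sub>L real)).
        (\<forall>x\<in>U. (F has_derivative blinfun_apply (F' x)) (at x)) \<and>
        (\<forall>x\<in>U. (F' has_derivative blinfun_apply (F'' x)) (at x)) \<and>
        continuous_on U F'')"

definition relent :: "real ^ 'a::finite \<Rightarrow> real ^ 'a \<Rightarrow> ereal" where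
  "relent p q = (if \<exists>a. p $ a > 0 \<and> q $ a = 0 then \<infinity>
     else ereal (\<Sum>a\<in>UNIV. if p $ a = 0 then 0 else p $ a * ln (p $ a / q $ a)))"

definition pidot :: "real ^ 'b::finite \<Rightarrow> real ^ 'a::finite ^ 'b \<Rightarrow> real ^ 'a" where
  "pidot \<pi> \<nu> = (\<Sum>b\<in>UNIV. \<pi> $ b *\<^sub>R \<nu> $ b)"

definition Phi :: "(real ^ 'a::finite \<Rightarrow> real) \<Rightarrow> real ^ 'a ^ 'b::finite \<Rightarrow> real ^ 'b
                   \<Rightarrow> real ^ 'a ^ 'b \<Rightarrow> ereal" where
  "Phi F \<alpha> \<pi> \<nu> = ereal (F (pidot \<pi> \<nu>)) + (\<Sum>b\<in>UNIV. ereal (\<pi> $ b) * relent (\<nu> $ b) (\<alpha> $ b))"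

definition Pspace :: "(real ^ 'a::finite ^ 'b::finite) set" where
  "Pspace = {\<nu>. \<forall>b. \<nu> $ b \<in> prob_simplex}"

definition minimizers :: "(real ^ 'a::finite \<Rightarrow> real) \<Rightarrow> real ^ 'a ^ 'b::finite \<Rightarrow> real ^ 'b
                   \<Rightarrow> (real ^ 'a ^ 'b) set" where
  "minimizers F \<alpha> \<pi> = {\<nu> \<in> Pspace. \<forall>\<nu>'\<in>Pspace. Phi F \<alpha> \<pi> \<nu> \<le> Phi F \<alpha> \<pi> \<nu>'}"

text \<open>Admissible tangent_sp directions of P(E)^{E'} at points where Phi is finite:
  each component has zero sum and vanishes where alpha[b] vanishes.\<close>
definition tangent_dirs :: "real ^ 'a::finite ^ 'b::finite \<Rightarrow> (real ^ 'a ^ 'b) set" where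
  "tangent_dirs \<alpha> = {y. \<forall>b. y $ b \<in> tangent_sp \<and> (\<forall>a. \<alpha> $ b $ a = 0 \<longrightarrow> y $ b $ a = 0)}"

text \<open>Positive definite Hessian of Phi at nu: for every nonzero tangent_sp direction y,
  t |-> Phi(nu + t y) is finite (and in P(E)^{E'}) near 0, twice differentiable at 0,
  with strictly positive second derivative y^T Hess y.\<close>
definition hess_pos_def ::
  "(real ^ 'a::finite \<Rightarrow> real) \<Rightarrow> real ^ 'a ^ 'b::finite \<Rightarrow> real ^ 'b \<Rightarrow> real ^ 'a ^ 'b \<Rightarrow> bool" where
  "hess_pos_def F \<alpha> \<pi> \<nu> \<longleftrightarrow>
    (\<forall>y\<in>tangent_dirs \<alpha>. y \<noteq> 0 \<longrightarrow>
      (\<forall>\<^sub>F t in nhds 0. \<nu> + t *\<^sub>R y \<in> Pspace \<and> \<bar>Phi F \<alpha> \<pi> (\<nu> + t *\<^sub>R y)\<bar> \<noteq> \<infinity>) \<and>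
      (\<exists>g h. (\<forall>\<^sub>F t in nhds 0.
                 ((\<lambda>s. real_of_ereal (Phi F \<alpha> \<pi> (\<nu> + s *\<^sub>R y))) has_real_derivative g t) (at t)) \<and>
             (g has_real_derivative h) (at 0) \<and> h > 0))"

definition stab_vec ::
  "(real ^ 'a::finite \<Rightarrow> real) \<Rightarrow> real ^ 'a ^ 'b::finite \<Rightarrow> real ^ 'b \<Rightarrow> real ^ 'a ^ 'b \<Rightarrow> real ^ 'b" where
  "stab_vec F \<alpha> \<pi> \<nu> = (THE B. B \<in> tangent_sp \<and>
     (\<forall>x\<in>tangent_sp. x \<bullet> B =
        - (frechet_derivative F (at (pidot \<pi> \<nu>)) (\<Sum>b\<in>UNIV. x $ b *\<^sub>R \<nu> $ b)
           + (\<Sum>b\<in>UNIV. x $ b * real_of_ereal (relent (\<nu> $ b) (\<alpha> $ b))))))"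

definition cov_pi :: "real ^ 'b::finite \<Rightarrow> 'b \<Rightarrow> 'b \<Rightarrow> real" where
  "cov_pi \<pi> b b' = \<pi> $ b * (if b = b' then 1 else 0) - \<pi> $ b * \<pi> $ b'"

definition centered_gaussian_law :: "(real ^ 'b::finite) measure \<Rightarrow> ('b \<Rightarrow> 'b \<Rightarrow> real) \<Rightarrow> bool" where
  "centered_gaussian_law M C \<longleftrightarrow> prob_space M \<and> sets M = sets borel \<and>
     (\<forall>u::real ^ 'b. (CLINT x|M. cis (u \<bullet> x)) =
        complex_of_real (exp (- (\<Sum>b\<in>UNIV. \<Sum>b'\<in>UNIV. u $ b * C b b' * u $ b') / 2)))"

definition region ::
  "(real ^ 'a::finite \<Rightarrow> real) \<Rightarrow> real ^ 'a ^ 'b::finite \<Rightarrow> real ^ 'b \<Rightarrow> real ^ 'a ^ 'b \<Rightarrow> (real ^ 'b) set" where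
  "region F \<alpha> \<pi> \<nu> = {x \<in> tangent_sp. \<forall>\<nu>'\<in>minimizers F \<alpha> \<pi> - {\<nu>}.
       x \<bullet> stab_vec F \<alpha> \<pi> \<nu> > x \<bullet> stab_vec F \<alpha> \<pi> \<nu>'}"

definition weight ::
  "(real ^ 'b::finite) measure \<Rightarrow> (real ^ 'a::finite \<Rightarrow> real) \<Rightarrow> real ^ 'a ^ 'b \<Rightarrow> real ^ 'b \<Rightarrow> real ^ 'a ^ 'b \<Rightarrow> real" where
  "weight M F \<alpha> \<pi> \<nu> = measure M (region F \<alpha> \<pi> \<nu>)"

end

theory Submission
  imports Defs
begin

text \<open>When E' has two points, the tangent space of P(E') is the line spanned by (1,-1), so
  \<open>\<langle>x, B\<^sub>\<nu>\<rangle> = 2 x(b\<^sub>1) B\<^sub>\<nu>(b\<^sub>1)\<close> and the stability vectors are ordered by their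
  (pairwise distinct) first coordinates. For \<open>x(b\<^sub>1) > 0\<close> only the minimizer with the largest
  coordinate wins, for \<open>x(b\<^sub>1) < 0\<close> only the one with the smallest, and every other minimizer has
  an empty region. The Gaussian G lies on the tangent line almost surely, and \<open>G(b\<^sub>1)\<close> is a
  centered normal variable of variance \<open>\<pi>(b\<^sub>1) \<pi>(b\<^sub>2) > 0\<close>, hence positive or negative with
  probability 1/2 each.\<close>

section \<open>Stability vectors\<close>

lemma tangent_sp_riesz:
  fixes k :: "real ^ 'b::finite"
  shows "\<exists>!B. B \<in> tangent_sp \<and> (\<forall>x\<in>tangent_sp. x \<bullet> B = x \<bullet> k)"
proof (rule ex1I)
  define B :: "real ^ 'b" where "B = k - (\<chi> b. (\<Sum>c\<in>UNIV. k $ c) / real CARD('b))"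
  have "x \<bullet> B = x \<bullet> k - (\<Sum>b\<in>UNIV. x $ b) * ((\<Sum>c\<in>UNIV. k $ c) / real CARD('b))" for x
    unfolding B_def inner_diff_right by (simp add: inner_vec_def sum_distrib_right sum_divide_distrib)
  then have B: "B \<in> tangent_sp \<and> (\<forall>x\<in>tangent_sp. x \<bullet> B = x \<bullet> k)"
    unfolding tangent_sp_def by (simp add: B_def sum_subtractf)
  then show "B \<in> tangent_sp \<and> (\<forall>x\<in>tangent_sp. x \<bullet> B = x \<bullet> k)" .
  fix B' assume B': "B' \<in> tangent_sp \<and> (\<forall>x\<in>tangent_sp. x \<bullet> B' = x \<bullet> k)"
  have "B' - B \<in> tangent_sp"
    using B' B unfolding tangent_sp_def by (simp add: sum_subtractf)
  then have "(B' - B) \<bullet> (B' - B) = 0"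
    using B' B by (simp add: inner_diff_right)
  then show "B' = B" by simp
qed

lemma stab_vec_in_tangent_sp:
  assumes "F differentiable at (pidot \<pi> \<nu>)"
  shows "stab_vec F \<alpha> \<pi> \<nu> \<in> tangent_sp"
proof -
  let ?D = "frechet_derivative F (at (pidot \<pi> \<nu>))"
  define k :: "real ^ 'b" where
    "k = (\<chi> b. - (?D (\<nu> $ b) + real_of_ereal (relent (\<nu> $ b) (\<alpha> $ b))))"
  interpret D: linear ?D
    using linear_frechet_derivative[OF assms] .
  have "- (?D (\<Sum>b\<in>UNIV. x $ b *\<^sub>R \<nu> $ b)
          + (\<Sum>b\<in>UNIV. x $ b * real_of_ereal (relent (\<nu> $ b) (\<alpha> $ b)))) = x \<bullet> k" for x
    by (simp add: k_def inner_vec_def D.sum D.scale algebra_simps flip: sum_negf sum.distrib)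
  then have "stab_vec F \<alpha> \<pi> \<nu> = (THE B. B \<in> tangent_sp \<and> (\<forall>x\<in>tangent_sp. x \<bullet> B = x \<bullet> k))"
    unfolding stab_vec_def by presburger
  then show ?thesis
    using theI'[OF tangent_sp_riesz[of k]] by simp
qed

lemma C2_on_differentiable: "C2_on U F \<Longrightarrow> x \<in> U \<Longrightarrow> F differentiable at x"
  unfolding C2_on_def differentiable_def by blast

lemma pidot_in_prob_simplex:
  assumes "\<pi> \<in> prob_simplex" and "\<nu> \<in> Pspace"
  shows "pidot \<pi> \<nu> \<in> prob_simplex"
proof -
  have "(\<Sum>a\<in>UNIV. \<Sum>b\<in>UNIV. \<pi> $ b * \<nu> $ b $ a) = (\<Sum>b\<in>UNIV. \<pi> $ b * (\<Sum>a\<in>UNIV. \<nu> $ b $ a))"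
    by (subst sum.swap) (simp add: sum_distrib_left)
  with assms show ?thesis
    unfolding prob_simplex_def pidot_def Pspace_def by (auto intro!: sum_nonneg)
qed

section \<open>Centered Gaussian vectors\<close>

definition quad_form :: "('b::finite \<Rightarrow> 'b \<Rightarrow> real) \<Rightarrow> real ^ 'b \<Rightarrow> real" where
  "quad_form C w = (\<Sum>b\<in>UNIV. \<Sum>b'\<in>UNIV. w $ b * C b b' * w $ b')"

lemma quad_form_scaleR: "quad_form C (t *\<^sub>R w) = t\<^sup>2 * quad_form C w"
  unfolding quad_form_def by (simp add: sum_distrib_left power2_eq_square algebra_simps)

lemma centered_gaussian_law_inner_measurable:
  assumes "centered_gaussian_law M C"
  shows "(\<lambda>x. w \<bullet> x) \<in> borel_measurable M"
proof -
  have sM: "sets M = sets borel"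
    using assms unfolding centered_gaussian_law_def by simp
  show ?thesis
    unfolding measurable_cong_sets[OF sM refl]
    by (intro borel_measurable_continuous_onI continuous_intros)
qed

lemma centered_gaussian_char_inner:
  assumes "centered_gaussian_law M C"
  shows "char (distr M borel (\<lambda>x. w \<bullet> x)) t = exp (- (t\<^sup>2 * quad_form C w) / 2)"
proof -
  have "char (distr M borel (\<lambda>x. w \<bullet> x)) t = (CLINT x|M. iexp (t * (w \<bullet> x)))"
    unfolding char_def
    by (subst integral_distr[OF centered_gaussian_law_inner_measurable[OF assms]]) auto
  also have "\<dots> = (CLINT x|M. cis ((t *\<^sub>R w) \<bullet> x))"
    by (simp add: cis_conv_exp)
  also have "\<dots> = exp (- quad_form C (t *\<^sub>R w) / 2)"
    using assms unfolding centered_gaussian_law_def quad_form_def by blast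
  finally show ?thesis
    by (simp add: quad_form_scaleR)
qed

lemma char_return: "char (return borel 0) t = 1"
  unfolding char_def by (simp add: integral_return)

lemma centered_gaussian_inner_AE_zero:
  assumes G: "centered_gaussian_law M C" and q: "quad_form C w = 0"
  shows "AE x in M. w \<bullet> x = 0"
proof -
  note meas = centered_gaussian_law_inner_measurable[OF G]
  have "distr M borel (\<lambda>x. w \<bullet> x) = return borel 0"
  proof (rule Levy_uniqueness)
    show "real_distribution (distr M borel (\<lambda>x. w \<bullet> x))"
      using G meas unfolding centered_gaussian_law_def by (simp add: prob_space.real_distribution_distr)
    show "real_distribution (return borel (0::real))"
      by (simp add: real_distribution_def real_distribution_axioms_def prob_space_return)
    show "char (distr M borel (\<lambda>x. w \<bullet> x)) = char (return borel 0)"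
      by (simp add: fun_eq_iff centered_gaussian_char_inner[OF G] q char_return)
  qed
  moreover have "AE y in return borel (0::real). y = 0"
    by (rule AE_return[THEN iffD2]) simp_all
  ultimately have "AE y in distr M borel (\<lambda>x. w \<bullet> x). y = 0"
    by (simp only:)
  then show ?thesis
    using meas by (simp add: AE_distr_iff)
qed

lemma centered_gaussian_inner_std_normal:
  assumes G: "centered_gaussian_law M C" and q: "quad_form C w = 1"
  shows "distr M borel (\<lambda>x. w \<bullet> x) = std_normal_distribution"
proof (rule Levy_uniqueness)
  show "real_distribution (distr M borel (\<lambda>x. w \<bullet> x))"
    using G centered_gaussian_law_inner_measurable[OF G] unfolding centered_gaussian_law_def
    by (simp add: prob_space.real_distribution_distr)
  show "real_distribution std_normal_distribution"
    by (rule real_dist_normal_dist)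
  show "char (distr M borel (\<lambda>x. w \<bullet> x)) = char std_normal_distribution"
    by (simp add: fun_eq_iff centered_gaussian_char_inner[OF G] q char_std_normal_distribution)
qed

lemma std_normal_distribution_uminus: "distr std_normal_distribution borel uminus = std_normal_distribution"
proof (rule Levy_uniqueness)
  show "real_distribution (distr std_normal_distribution borel uminus)"
    using real_distribution.axioms(1)[OF real_dist_normal_dist]
    by (rule prob_space.real_distribution_distr) simp
  show "real_distribution std_normal_distribution"
    by (rule real_dist_normal_dist)
  have "char (distr std_normal_distribution borel uminus) t = char std_normal_distribution (- t)" for t
    unfolding char_def by (subst integral_distr) auto
  then show "char (distr std_normal_distribution borel uminus) = char std_normal_distribution"
    by (simp add: fun_eq_iff char_std_normal_distribution)
qed

lemma std_normal_distribution_half: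
  "measure std_normal_distribution {0<..} = 1/2"
  "measure std_normal_distribution {..<0} = 1/2"
proof -
  let ?N = std_normal_distribution
  interpret N: real_distribution ?N
    by (rule real_dist_normal_dist)
  have "measure ?N {..<0} = measure ?N {0<..}"
    using measure_distr[of uminus ?N borel "{..<0}"]
    by (simp add: std_normal_distribution_uminus vimage_def greaterThan_def)
  moreover have "measure ?N {0} = 0"
    by (simp add: measure_def emeasure_density nn_integral_null_set countable_imp_null_set_lborel)
  moreover have "measure ?N ({0<..} \<union> {..<0}) = measure ?N {0<..} + measure ?N {..<0}"
    by (rule N.finite_measure_Union) auto
  moreover have "measure ?N ({0<..} \<union> {..<0} \<union> {0}) = measure ?N ({0<..} \<union> {..<0}) + measure ?N {0}"
    by (rule N.finite_measure_Union) auto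
  moreover have "measure ?N ({0<..} \<union> {..<0} \<union> {0}) = 1"
  proof -
    have "{0<..} \<union> {..<0} \<union> {0::real} = UNIV"
      by auto
    then show ?thesis
      using N.prob_space by simp
  qed
  ultimately show "measure ?N {0<..} = 1/2" "measure ?N {..<0} = 1/2"
    by linarith+
qed

lemma centered_gaussian_inner_sign_half:
  assumes G: "centered_gaussian_law M C" and q: "quad_form C w > 0"
  shows "measure M {x. 0 < w \<bullet> x} = 1/2" "measure M {x. w \<bullet> x < 0} = 1/2"
proof -
  define u where "u = w /\<^sub>R sqrt (quad_form C w)"
  have "quad_form C u = 1"
    using q by (simp add: u_def quad_form_scaleR power_inverse)
  then have D: "distr M borel (\<lambda>x. u \<bullet> x) = std_normal_distribution"
    by (rule centered_gaussian_inner_std_normal[OF G])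
  have law: "measure M ((\<lambda>x. u \<bullet> x) -` A \<inter> space M) = measure std_normal_distribution A"
    if "A \<in> sets borel" for A
    using measure_distr[OF centered_gaussian_law_inner_measurable[OF G, of u] that] D by simp
  have "space M = UNIV"
    using G sets_eq_imp_space_eq[of M borel] unfolding centered_gaussian_law_def by simp
  then have "{x. 0 < w \<bullet> x} = (\<lambda>x. u \<bullet> x) -` {0<..} \<inter> space M"
    "{x. w \<bullet> x < 0} = (\<lambda>x. u \<bullet> x) -` {..<0} \<inter> space M"
    using q by (auto simp: u_def zero_less_mult_iff mult_less_0_iff)
  then show "measure M {x. 0 < w \<bullet> x} = 1/2" "measure M {x. w \<bullet> x < 0} = 1/2"
    by (simp_all add: law std_normal_distribution_half)
qed

lemma quad_form_cov_pi_ones: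
  assumes "\<pi> \<in> prob_simplex"
  shows "quad_form (cov_pi \<pi>) (\<chi> b. 1) = 0"
proof -
  have "(\<Sum>b'\<in>UNIV. cov_pi \<pi> b b') = \<pi> $ b * (1 - (\<Sum>b'\<in>UNIV. \<pi> $ b'))" for b
    unfolding cov_pi_def sum_subtractf by (simp add: right_diff_distrib flip: sum_distrib_left)
  then show ?thesis
    using assms unfolding quad_form_def prob_simplex_def by simp
qed

lemma quad_form_cov_pi_axis: "quad_form (cov_pi \<pi>) (axis b 1) = \<pi> $ b * (1 - \<pi> $ b)"
  by (simp add: quad_form_def axis_def cov_pi_def if_distrib if_distribR sum.If_cases algebra_simps power2_eq_square)

lemma centered_gaussian_cov_pi_AE_tangent_sp:
  assumes G: "centered_gaussian_law M (cov_pi \<pi>)" and "\<pi> \<in> prob_simplex"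
  shows "AE x in M. x \<in> tangent_sp"
proof -
  have "AE x in M. (\<chi> b. 1) \<bullet> x = 0"
    by (rule centered_gaussian_inner_AE_zero[OF G quad_form_cov_pi_ones[OF assms(2)]])
  then show ?thesis
    unfolding tangent_sp_def by (simp add: inner_vec_def)
qed

lemma centered_gaussian_cov_pi_coord_sign_half:
  assumes G: "centered_gaussian_law M (cov_pi \<pi>)" and \<pi>: "\<pi> \<in> prob_simplex"
    and pos: "0 < \<pi> $ b" and lt1: "\<pi> $ b < 1"
  shows "measure M {x \<in> tangent_sp. 0 < x $ b} = 1/2" "measure M {x \<in> tangent_sp. x $ b < 0} = 1/2"
proof -
  have sM: "sets M = sets borel"
    using G unfolding centered_gaussian_law_def by simp
  have T: "tangent_sp \<in> sets M"
    unfolding sM tangent_sp_def by (intro borel_closed closed_Collect_eq continuous_intros)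
  have A: "{x. 0 < x $ b} \<in> sets M" "{x. x $ b < 0} \<in> sets M"
    unfolding sM by (intro borel_open open_Collect_less continuous_intros)+
  note AE = centered_gaussian_cov_pi_AE_tangent_sp[OF G \<pi>]
  have "quad_form (cov_pi \<pi>) (axis b 1) > 0"
    using pos lt1 by (simp add: quad_form_cov_pi_axis)
  note half = centered_gaussian_inner_sign_half[OF G this, unfolded inner_axis', simplified]
  have "measure M {x \<in> tangent_sp. 0 < x $ b} = measure M {x. 0 < x $ b}"
    by (rule measure_eq_AE) (use AE T A in \<open>auto simp: Collect_conj_eq\<close>)
  then show "measure M {x \<in> tangent_sp. 0 < x $ b} = 1/2"
    using half by simp
  have "measure M {x \<in> tangent_sp. x $ b < 0} = measure M {x. x $ b < 0}"
    by (rule measure_eq_AE) (use AE T A in \<open>auto simp: Collect_conj_eq\<close>)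
  then show "measure M {x \<in> tangent_sp. x $ b < 0} = 1/2"
    using half by simp
qed

lemma finite_inj_on_strict_extrema:
  fixes c :: "'x \<Rightarrow> real"
  assumes "finite S" "inj_on c S" "2 \<le> card S"
  obtains xM xm where "xM \<in> S" "xm \<in> S" "xM \<noteq> xm"
    "\<forall>x\<in>S - {xM}. c x < c xM" "\<forall>x\<in>S - {xm}. c xm < c x"
proof -
  have ne: "c ` S \<noteq> {}"
    using assms(3) by auto
  obtain xM where xM: "xM \<in> S" "c xM = Max (c ` S)"
    using Max_in[OF finite_imageI[OF assms(1)] ne] by auto
  obtain xm where xm: "xm \<in> S" "c xm = Min (c ` S)"
    using Min_in[OF finite_imageI[OF assms(1)] ne] by auto
  have max: "\<forall>x\<in>S - {xM}. c x < c xM"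
  proof
    fix x assume "x \<in> S - {xM}"
    then have "c x \<le> c xM" "c x \<noteq> c xM"
      using xM assms(1) inj_onD[OF assms(2), of x xM] by auto
    then show "c x < c xM"
      by simp
  qed
  have min: "\<forall>x\<in>S - {xm}. c xm < c x"
  proof
    fix x assume "x \<in> S - {xm}"
    then have "c xm \<le> c x" "c x \<noteq> c xm"
      using xm assms(1) inj_onD[OF assms(2), of x xm] by auto
    then show "c xm < c x"
      by simp
  qed
  have "card (S - {xM}) > 0"
    using assms(3) xM(1) by (simp add: card_Diff_singleton)
  then obtain x where "x \<in> S - {xM}"
    by (metis card.empty ex_in_conv less_irrefl)
  then have "xM \<noteq> xm"
    using max min xm(1) by (metis Diff_iff less_asym' singletonD)
  with xM xm max min that show ?thesis
    by blast
qed

lemma scaled_strict_argmax_iff: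
  fixes c :: "'x \<Rightarrow> real"
  assumes "xM \<in> S" "xm \<in> S" "xM \<noteq> xm" "x \<in> S"
    and max: "\<forall>y\<in>S - {xM}. c y < c xM" and min: "\<forall>y\<in>S - {xm}. c xm < c y"
  shows "(\<forall>y\<in>S - {x}. t * c y < t * c x) \<longleftrightarrow> (x = xM \<and> 0 < t) \<or> (x = xm \<and> t < 0)"
proof
  assume H: "\<forall>y\<in>S - {x}. t * c y < t * c x"
  show "(x = xM \<and> 0 < t) \<or> (x = xm \<and> t < 0)"
  proof (cases "x = xM")
    case True
    have "t * c xm < t * c xM" "c xm < c xM"
      using H max True assms(2,3) by auto
    then show ?thesis
      using True by (auto simp: mult_less_cancel_left)
  next
    case False
    have "t * c xM < t * c x" "c x < c xM"
      using H max False assms(1,4) by auto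
    then have "t < 0"
      by (auto simp: mult_less_cancel_left)
    have "x = xm"
    proof (rule ccontr)
      assume "x \<noteq> xm"
      then have "t * c xm < t * c x" "c xm < c x"
        using H min assms(2,4) by auto
      with \<open>t < 0\<close> show False
        by (auto simp: mult_less_cancel_left)
    qed
    with \<open>t < 0\<close> show ?thesis
      by blast
  qed
next
  assume "(x = xM \<and> 0 < t) \<or> (x = xm \<and> t < 0)"
  then show "\<forall>y\<in>S - {x}. t * c y < t * c x"
    using max min by (auto intro: mult_strict_left_mono mult_strict_left_mono_neg)
qed

section \<open>The two-point case\<close>

lemma tangent_sp_two_point_iff:
  assumes "UNIV = {b1, b2}" "b1 \<noteq> b2"
  shows "x \<in> tangent_sp \<longleftrightarrow> x $ b2 = - x $ b1"
  using assms(2) unfolding tangent_sp_def assms(1) by (auto simp: add_eq_0_iff)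

lemma inner_tangent_sp_two_point:
  assumes "UNIV = {b1, b2}" "b1 \<noteq> b2" and "x \<in> tangent_sp" "y \<in> tangent_sp"
  shows "x \<bullet> y = 2 * x $ b1 * y $ b1"
  using assms(2-4) tangent_sp_two_point_iff[OF assms(1,2)] unfolding inner_vec_def assms(1) by simp

lemma inj_on_coord_tangent_sp_two_point:
  assumes "UNIV = {b1, b2}" "b1 \<noteq> b2"
  shows "inj_on (\<lambda>x. x $ b1) tangent_sp"
proof (rule inj_onI)
  fix x y assume "x \<in> tangent_sp" "y \<in> tangent_sp" "x $ b1 = y $ b1"
  then have "x $ b = y $ b" for b
    using assms tangent_sp_two_point_iff[OF assms] by (cases "b = b1") auto
  then show "x = y"
    by (simp add: vec_eq_iff)
qed

lemma region_two_point:
  assumes U: "UNIV = {b1, b2}" "b1 \<noteq> b2"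
    and stab: "\<forall>\<nu>\<in>minimizers F \<alpha> \<pi>. stab_vec F \<alpha> \<pi> \<nu> \<in> tangent_sp"
    and ext: "\<nu>M \<in> minimizers F \<alpha> \<pi>" "\<nu>m \<in> minimizers F \<alpha> \<pi>" "\<nu>M \<noteq> \<nu>m"
      "\<forall>\<nu>\<in>minimizers F \<alpha> \<pi> - {\<nu>M}. stab_vec F \<alpha> \<pi> \<nu> $ b1 < stab_vec F \<alpha> \<pi> \<nu>M $ b1"
      "\<forall>\<nu>\<in>minimizers F \<alpha> \<pi> - {\<nu>m}. stab_vec F \<alpha> \<pi> \<nu>m $ b1 < stab_vec F \<alpha> \<pi> \<nu> $ b1"
    and \<nu>: "\<nu> \<in> minimizers F \<alpha> \<pi>"
  shows "region F \<alpha> \<pi> \<nu> = {x \<in> tangent_sp. (\<nu> = \<nu>M \<and> 0 < x $ b1) \<or> (\<nu> = \<nu>m \<and> x $ b1 < 0)}"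
proof -
  have "x \<bullet> stab_vec F \<alpha> \<pi> \<nu>' = (2 * x $ b1) * stab_vec F \<alpha> \<pi> \<nu>' $ b1"
    if "x \<in> tangent_sp" "\<nu>' \<in> minimizers F \<alpha> \<pi>" for x \<nu>'
    using inner_tangent_sp_two_point[OF U that(1)] stab that(2) by simp
  then have "region F \<alpha> \<pi> \<nu> = {x \<in> tangent_sp. \<forall>\<nu>'\<in>minimizers F \<alpha> \<pi> - {\<nu>}.
      (2 * x $ b1) * stab_vec F \<alpha> \<pi> \<nu>' $ b1 < (2 * x $ b1) * stab_vec F \<alpha> \<pi> \<nu> $ b1}"
    unfolding region_def using \<nu> by auto
  also have "\<dots> = {x \<in> tangent_sp. (\<nu> = \<nu>M \<and> 0 < x $ b1) \<or> (\<nu> = \<nu>m \<and> x $ b1 < 0)}"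
    using scaled_strict_argmax_iff[OF ext(1-3) \<nu> ext(4,5)] by auto
  finally show ?thesis .
qed

theorem mainTheorem4:
  fixes F :: "real ^ 'a::finite \<Rightarrow> real"
    and \<alpha> :: "real ^ 'a ^ 'b::finite"
    and \<pi> :: "real ^ 'b"
    and M :: "(real ^ 'b) measure"
  assumes card2: "CARD('b) = 2"
    and F_C2: "\<exists>U. prob_simplex \<subseteq> U \<and> C2_on U F"
    and alpha: "\<forall>b. \<alpha> $ b \<in> prob_simplex"
    and pi: "\<pi> \<in> prob_simplex" "\<forall>b. \<pi> $ b > 0"
    and nondeg1: "finite (minimizers F \<alpha> \<pi>)" "\<forall>\<nu>\<in>minimizers F \<alpha> \<pi>. hess_pos_def F \<alpha> \<pi> \<nu>"
    and nondeg2: "inj_on (stab_vec F \<alpha> \<pi>) (minimizers F \<alpha> \<pi>)"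
    and two: "card (minimizers F \<alpha> \<pi>) \<ge> 2"
    and G: "centered_gaussian_law M (cov_pi \<pi>)"
  shows "card {\<nu> \<in> minimizers F \<alpha> \<pi>. weight M F \<alpha> \<pi> \<nu> > 0} = 2 \<and>
         (\<forall>\<nu>\<in>{\<nu> \<in> minimizers F \<alpha> \<pi>. weight M F \<alpha> \<pi> \<nu> > 0}. weight M F \<alpha> \<pi> \<nu> = 1/2)"
proof -
  obtain b1 b2 :: 'b where U: "UNIV = {b1, b2}" "b1 \<noteq> b2"
    using card2 unfolding card_2_iff by blast
  let ?S = "minimizers F \<alpha> \<pi>"
  have stab: "\<forall>\<nu>\<in>?S. stab_vec F \<alpha> \<pi> \<nu> \<in> tangent_sp"
    using F_C2 pi(1) by (auto intro!: stab_vec_in_tangent_sp C2_on_differentiable pidot_in_prob_simplex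
      simp: minimizers_def)
  have "inj_on (\<lambda>\<nu>. stab_vec F \<alpha> \<pi> \<nu> $ b1) ?S"
    using comp_inj_on[OF nondeg2 inj_on_subset[OF inj_on_coord_tangent_sp_two_point[OF U]]] stab
    by (auto simp: o_def)
  then obtain \<nu>M \<nu>m where ext: "\<nu>M \<in> ?S" "\<nu>m \<in> ?S" "\<nu>M \<noteq> \<nu>m"
    "\<forall>\<nu>\<in>?S - {\<nu>M}. stab_vec F \<alpha> \<pi> \<nu> $ b1 < stab_vec F \<alpha> \<pi> \<nu>M $ b1"
    "\<forall>\<nu>\<in>?S - {\<nu>m}. stab_vec F \<alpha> \<pi> \<nu>m $ b1 < stab_vec F \<alpha> \<pi> \<nu> $ b1"
    using finite_inj_on_strict_extrema[OF nondeg1(1) _ two] by blast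
  have "\<pi> $ b1 + \<pi> $ b2 = 1"
    using pi(1) U(2) unfolding prob_simplex_def U(1) by simp
  then have "\<pi> $ b1 < 1"
    using pi(2) by (metis less_add_same_cancel1)
  note half = centered_gaussian_cov_pi_coord_sign_half[OF G pi(1) pi(2)[rule_format] this]
  have weight: "weight M F \<alpha> \<pi> \<nu> = (if \<nu> = \<nu>M \<or> \<nu> = \<nu>m then 1/2 else 0)" if "\<nu> \<in> ?S" for \<nu>
    unfolding weight_def region_two_point[OF U stab ext that] using ext(3) half by auto
  then have "{\<nu> \<in> ?S. weight M F \<alpha> \<pi> \<nu> > 0} = {\<nu>M, \<nu>m}"
    using ext(1,2) by (auto split: if_splits)
  then show ?thesis
    using ext(1-3) weight by auto
qed

end
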